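(* Let $D$ be a vertex-supported effective divisor on a metric graph $\Gamma$. If $f\in R(D)$ and $D+(f)$ is an anchor divisor, then $f$ has at most two linear pieces on each edge of $\Gamma$.
   Context: A metric graph $\Gamma=(V,E)$ is a connected undirected graph whose edges have positive real lengths. Divisors are finite formal $\mathbb{Z}$-combinations of points of $\Gamma$; effective means nonnegative coefficients; vertex-supported means support contained in $V$. A rational function is a continuous $f:\Gamma\to\mathbb{R}$, piecewise linear on each edge with finitely many pieces and integer slopes; $(f)=\sum_x\mathrm{ord}_x(f)x$, where $\mathrm{ord}_x(f)$ is the sum of the outgoing slopes of $f$ at $x$. $R(D)$ is the set of rational functions $f$ with $D+(f)$ effective. A divisor $L$ is an anchor divisor if for each edge of $\Gamma$ there is at most one interior point $x$ of that edge with $L(x)>0$. *)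

theory Defs
  imports Complex_Main
begin

text \<open>Metric graph: finite vertex set V, finite edge set E, each edge has two
  endpoints (ends e) and a positive length (len e). Loops and multiple edges allowed.\<close>

definition adjacent :: "'e set \<Rightarrow> ('e \<Rightarrow> 'v \<times> 'v) \<Rightarrow> 'v \<Rightarrow> 'v \<Rightarrow> bool" where
  "adjacent E ends u w \<longleftrightarrow> (\<exists>e\<in>E. ends e = (u, w) \<or> ends e = (w, u))"

definition metric_graph :: "'v set \<Rightarrow> 'e set \<Rightarrow> ('e \<Rightarrow> 'v \<times> 'v) \<Rightarrow> ('e \<Rightarrow> real) \<Rightarrow> bool" where
  "metric_graph V E ends len \<longleftrightarrow>
     finite V \<and> V \<noteq> {} \<and> finite E \<and>
     (\<forall>e\<in>E. fst (ends e) \<in> V \<and> snd (ends e) \<in> V \<and> len e > 0) \<and>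
     (\<forall>u\<in>V. \<forall>w\<in>V. (adjacent E ends)\<^sup>*\<^sup>* u w)"

text \<open>Points of the metric graph: vertices, and interior points of edges
  (Pt e t is the point at distance t from the first endpoint of e, 0 < t < len e).\<close>
datatype ('v, 'e) point = Vtx 'v | Pt 'e real

definition is_point :: "'v set \<Rightarrow> 'e set \<Rightarrow> ('e \<Rightarrow> real) \<Rightarrow> ('v, 'e) point \<Rightarrow> bool" where
  "is_point V E len x \<longleftrightarrow>
     (\<exists>v\<in>V. x = Vtx v) \<or> (\<exists>e\<in>E. \<exists>t. 0 < t \<and> t < len e \<and> x = Pt e t)"

definition divisor :: "'v set \<Rightarrow> 'e set \<Rightarrow> ('e \<Rightarrow> real) \<Rightarrow> (('v, 'e) point \<Rightarrow> int) \<Rightarrow> bool" where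
  "divisor V E len D \<longleftrightarrow> finite {x. D x \<noteq> 0} \<and> (\<forall>x. D x \<noteq> 0 \<longrightarrow> is_point V E len x)"

definition effective :: "(('v, 'e) point \<Rightarrow> int) \<Rightarrow> bool" where
  "effective D \<longleftrightarrow> (\<forall>x. D x \<ge> 0)"

definition vertex_supported :: "'v set \<Rightarrow> (('v, 'e) point \<Rightarrow> int) \<Rightarrow> bool" where
  "vertex_supported V D \<longleftrightarrow> (\<forall>x. D x \<noteq> 0 \<longrightarrow> (\<exists>v\<in>V. x = Vtx v))"

definition edge_fun :: "('e \<Rightarrow> 'v \<times> 'v) \<Rightarrow> ('e \<Rightarrow> real) \<Rightarrow> (('v, 'e) point \<Rightarrow> real) \<Rightarrow> 'e \<Rightarrow> real \<Rightarrow> real" where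
  "edge_fun ends len f e t =
     (if t = 0 then f (Vtx (fst (ends e)))
      else if t = len e then f (Vtx (snd (ends e)))
      else f (Pt e t))"

text \<open>Rational function: on each edge, continuous and piecewise linear with finitely many
  pieces and integer slopes (continuity follows from the pieces being closed intervals
  glued at vertices).\<close>
definition rational_function :: "'e set \<Rightarrow> ('e \<Rightarrow> 'v \<times> 'v) \<Rightarrow> ('e \<Rightarrow> real) \<Rightarrow> (('v, 'e) point \<Rightarrow> real) \<Rightarrow> bool" where
  "rational_function E ends len f \<longleftrightarrow>
     (\<forall>e\<in>E. \<exists>ts :: real list.
        length ts \<ge> 2 \<and> sorted_wrt (<) ts \<and> hd ts = 0 \<and> last ts = len e \<and>
        (\<forall>i < length ts - 1. \<exists>(a::real) (m::int).
            \<forall>t\<in>{ts ! i .. ts ! (i+1)}. edge_fun ends len f e t = a + of_int m * t))"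

definition rslope :: "(real \<Rightarrow> real) \<Rightarrow> real \<Rightarrow> real" where
  "rslope g t = (THE m. (g has_real_derivative m) (at_right t))"

definition lslope :: "(real \<Rightarrow> real) \<Rightarrow> real \<Rightarrow> real" where
  "lslope g t = (THE m. (g has_real_derivative m) (at_left t))"

text \<open>ord_x(f): sum of outgoing slopes of f at x.\<close>
fun ord :: "'e set \<Rightarrow> ('e \<Rightarrow> 'v \<times> 'v) \<Rightarrow> ('e \<Rightarrow> real) \<Rightarrow> (('v, 'e) point \<Rightarrow> real) \<Rightarrow> ('v, 'e) point \<Rightarrow> real" where
  "ord E ends len f (Pt e t) = rslope (edge_fun ends len f e) t - lslope (edge_fun ends len f e) t"
| "ord E ends len f (Vtx v) =
     (\<Sum>e\<in>{e\<in>E. fst (ends e) = v}. rslope (edge_fun ends len f e) 0)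
   + (\<Sum>e\<in>{e\<in>E. snd (ends e) = v}. - lslope (edge_fun ends len f e) (len e))"

definition RD :: "'v set \<Rightarrow> 'e set \<Rightarrow> ('e \<Rightarrow> 'v \<times> 'v) \<Rightarrow> ('e \<Rightarrow> real) \<Rightarrow> (('v, 'e) point \<Rightarrow> int) \<Rightarrow> (('v, 'e) point \<Rightarrow> real) set" where
  "RD V E ends len D = {f. rational_function E ends len f \<and>
     (\<forall>x. is_point V E len x \<longrightarrow> real_of_int (D x) + ord E ends len f x \<ge> 0)}"

text \<open>Anchor divisor (given as a real-valued function, as D + (f) is): on each edge at most
  one interior point with positive value.\<close>
definition anchor :: "'e set \<Rightarrow> ('e \<Rightarrow> real) \<Rightarrow> (('v, 'e) point \<Rightarrow> real) \<Rightarrow> bool" where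
  "anchor E len L \<longleftrightarrow>
     (\<forall>e\<in>E. \<forall>s t. 0 < s \<and> s < len e \<and> 0 < t \<and> t < len e \<and> L (Pt e s) > 0 \<and> L (Pt e t) > 0
        \<longrightarrow> s = t)"

definition at_most_two_pieces :: "('e \<Rightarrow> 'v \<times> 'v) \<Rightarrow> ('e \<Rightarrow> real) \<Rightarrow> (('v, 'e) point \<Rightarrow> real) \<Rightarrow> 'e \<Rightarrow> bool" where
  "at_most_two_pieces ends len f e \<longleftrightarrow>
     (\<exists>s\<in>{0..len e}. \<exists>(a1::real) (m1::int) (a2::real) (m2::int).
        (\<forall>t\<in>{0..s}. edge_fun ends len f e t = a1 + of_int m1 * t) \<and>
        (\<forall>t\<in>{s..len e}. edge_fun ends len f e t = a2 + of_int m2 * t))"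

end

theory Submission
  imports Defs
begin

text \<open>On an edge, write the restriction of f as an affine function on each segment of a
  partition. Since D vanishes at interior points, the value of D + (f) at an interior
  breakpoint is the jump of the integer slope there, which is nonnegative; the anchor
  condition allows a strictly positive jump at no more than one breakpoint. Hence the slope
  is constant before and after that breakpoint, and continuity glues the segments on either
  side into a single affine piece.\<close>

definition affine_on :: "(real \<Rightarrow> real) \<Rightarrow> real set \<Rightarrow> real \<Rightarrow> bool" where
  "affine_on g S m \<longleftrightarrow> (\<exists>a. \<forall>t\<in>S. g t = a + m * t)"

lemma affine_on_singleton: "affine_on g {x} m"
  unfolding affine_on_def by (intro exI[of _ "g x - m * x"]) auto

lemma affine_on_glue:
  assumes "r \<le> s" "s \<le> u" "affine_on g {r..s} m" "affine_on g {s..u} m"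
  shows "affine_on g {r..u} m"
proof -
  from assms(3) obtain a where a: "\<forall>t\<in>{r..s}. g t = a + m * t"
    unfolding affine_on_def by blast
  from assms(4) obtain b where b: "\<forall>t\<in>{s..u}. g t = b + m * t"
    unfolding affine_on_def by blast
  have "a = b" using a b assms(1,2) by force
  then have "\<forall>t\<in>{r..u}. g t = a + m * t"
    using a b by (metis atLeastAtMost_iff linear)
  then show ?thesis unfolding affine_on_def by blast
qed

lemma rslope_affine_on:
  assumes "t < u" "affine_on g {t..u} m"
  shows "rslope g t = m"
proof -
  obtain a where a: "\<forall>x\<in>{t..u}. g x = a + m * x"
    using assms(2) unfolding affine_on_def by blast
  have "eventually (\<lambda>x. a + m * x = g x) (at_right t)"
    unfolding eventually_at_right[OF assms(1)] using a assms(1) by (intro exI[of _ u]) auto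
  moreover have "((\<lambda>x. a + m * x) has_real_derivative m) (at_right t)"
    by (auto intro!: derivative_eq_intros)
  moreover have "a + m * t = g t" using a assms(1) by simp
  ultimately have "(g has_real_derivative m) (at_right t)"
    using has_field_derivative_cong_eventually by metis
  then show ?thesis
    using assms(1) unfolding rslope_def has_field_derivative_iff
    by (intro the_equality) (auto intro: tendsto_unique[of "at_right t"])
qed

lemma lslope_affine_on:
  assumes "u < t" "affine_on g {u..t} m"
  shows "lslope g t = m"
proof -
  obtain a where a: "\<forall>x\<in>{u..t}. g x = a + m * x"
    using assms(2) unfolding affine_on_def by blast
  have "eventually (\<lambda>x. a + m * x = g x) (at_left t)"
    unfolding eventually_at_left[OF assms(1)] using a assms(1) by (intro exI[of _ u]) auto
  moreover have "((\<lambda>x. a + m * x) has_real_derivative m) (at_left t)"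
    by (auto intro!: derivative_eq_intros)
  moreover have "a + m * t = g t" using a assms(1) by simp
  ultimately have "(g has_real_derivative m) (at_left t)"
    using has_field_derivative_cong_eventually by metis
  then show ?thesis
    using assms(1) unfolding lslope_def has_field_derivative_iff
    by (intro the_equality) (auto intro: tendsto_unique[of "at_left t"])
qed

lemma slope_jump_at_breakpoint:
  assumes "sorted_wrt (<) ts" "0 < i" "i < length ts - 1"
    and "affine_on g {ts!(i-1)..ts!i} m" "affine_on g {ts!i..ts!Suc i} m'"
  shows "rslope g (ts!i) - lslope g (ts!i) = m' - m"
  using assms rslope_affine_on[of "ts!i" "ts!Suc i" g m'] lslope_affine_on[of "ts!(i-1)" "ts!i" g m]
  by (simp add: sorted_wrt_nth_less)

lemma affine_on_partition:
  assumes "sorted_wrt (<) ts" "p \<le> q" "q < length ts"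
    and "\<And>i. p \<le> i \<Longrightarrow> i < q \<Longrightarrow> affine_on g {ts!i..ts!Suc i} m"
  shows "affine_on g {ts!p..ts!q} m"
  using assms(2-4)
proof (induction q)
  case 0
  then show ?case by (simp add: affine_on_singleton)
next
  case (Suc q)
  show ?case
  proof (cases "p = Suc q")
    case True
    then show ?thesis by (simp add: affine_on_singleton)
  next
    case False
    then have "affine_on g {ts!p..ts!q} m" using Suc by simp
    moreover have "ts!p \<le> ts!q" "ts!q \<le> ts!Suc q"
      using False Suc.prems(1,2) strict_sorted_imp_sorted[OF assms(1)]
      by (auto intro!: sorted_nth_mono)
    ultimately show ?thesis
      using affine_on_glue Suc.prems(3) False Suc.prems(1) by fastforce
  qed
qed

lemma eq_first_if_no_jumps:
  fixes p q i :: nat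
  assumes "\<And>j. p < j \<Longrightarrow> j < q \<Longrightarrow> f j = f (j - 1)" "p \<le> i" "i < q"
  shows "f i = f p"
  using assms(2,3)
proof (induction i)
  case (Suc i)
  then show ?case using assms(1)[of "Suc i"] by (cases "p = Suc i") auto
qed simp

lemma two_pieces_if_one_jump:
  fixes ts :: "real list" and M :: "nat \<Rightarrow> real"
  assumes "sorted_wrt (<) ts" "length ts \<ge> 2"
    and pieces: "\<And>i. i < length ts - 1 \<Longrightarrow> affine_on g {ts!i..ts!Suc i} (M i)"
    and one_jump: "\<And>i j. \<lbrakk>0 < i; i < length ts - 1; M i \<noteq> M (i - 1);
        0 < j; j < length ts - 1; M j \<noteq> M (j - 1)\<rbrakk> \<Longrightarrow> i = j"
  shows "\<exists>k < length ts - 1. affine_on g {ts!0..ts!k} (M 0) \<and> affine_on g {ts!k..ts!(length ts - 1)} (M k)"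
proof -
  define n where "n = length ts - 1"
  obtain k where "k < n" and no_jump: "\<And>j. 0 < j \<Longrightarrow> j < n \<Longrightarrow> j \<noteq> k \<Longrightarrow> M j = M (j - 1)"
  proof (cases "\<exists>i. 0 < i \<and> i < n \<and> M i \<noteq> M (i - 1)")
    case True
    then obtain k where "0 < k" "k < n" "M k \<noteq> M (k - 1)" by blast
    then show ?thesis using one_jump by (intro that[of k]) (auto simp: n_def)
  next
    case False
    then show ?thesis using assms(2) by (intro that[of 0]) (auto simp: n_def)
  qed
  have before: "M i = M 0" if "i < k" for i
  proof (rule eq_first_if_no_jumps[of 0 k])
    show "M j = M (j - 1)" if "0 < j" "j < k" for j
      using that \<open>k < n\<close> by (intro no_jump) auto
  qed (use that in auto)
  have after: "M i = M k" if "k \<le> i" "i < n" for i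
  proof (rule eq_first_if_no_jumps[of k n])
    show "M j = M (j - 1)" if "k < j" "j < n" for j
      using that by (intro no_jump) auto
  qed (use that in auto)
  have "affine_on g {ts!0..ts!k} (M 0)"
  proof (rule affine_on_partition[OF assms(1)])
    fix i assume "0 \<le> i" "i < k"
    then show "affine_on g {ts!i..ts!Suc i} (M 0)"
      using pieces[of i] before[of i] \<open>k < n\<close> by (simp add: n_def)
  qed (use \<open>k < n\<close> n_def in auto)
  moreover have "affine_on g {ts!k..ts!n} (M k)"
  proof (rule affine_on_partition[OF assms(1)])
    fix i assume "k \<le> i" "i < n"
    then show "affine_on g {ts!i..ts!Suc i} (M k)"
      using pieces[of i] after[of i] by (simp add: n_def)
  qed (use \<open>k < n\<close> n_def in auto)
  ultimately show ?thesis using \<open>k < n\<close> unfolding n_def by blast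
qed

lemma rational_function_edge_partition:
  assumes "rational_function E ends len f" "e \<in> E"
  obtains ts and M :: "nat \<Rightarrow> int"
  where "length ts \<ge> 2" "sorted_wrt (<) ts" "ts!0 = 0" "ts!(length ts - 1) = len e"
    and "\<And>i. i < length ts - 1 \<Longrightarrow> affine_on (edge_fun ends len f e) {ts!i..ts!Suc i} (of_int (M i))"
proof -
  obtain ts :: "real list" where ts: "length ts \<ge> 2" "sorted_wrt (<) ts" "hd ts = 0" "last ts = len e"
    and pieces: "\<forall>i < length ts - 1. \<exists>m::int. affine_on (edge_fun ends len f e) {ts!i..ts!Suc i} (of_int m)"
    using assms unfolding rational_function_def affine_on_def by fastforce
  then obtain M :: "nat \<Rightarrow> int"
    where "\<And>i. i < length ts - 1 \<Longrightarrow> affine_on (edge_fun ends len f e) {ts!i..ts!Suc i} (of_int (M i))"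
    by metis
  moreover have "ts!0 = 0" "ts!(length ts - 1) = len e"
    using ts hd_conv_nth[of ts] last_conv_nth[of ts] by force+
  ultimately show ?thesis using that ts(1,2) by blast
qed

lemma at_most_two_piecesI:
  assumes "s \<in> {0..len e}"
    and "affine_on (edge_fun ends len f e) {0..s} (of_int m1)"
    and "affine_on (edge_fun ends len f e) {s..len e} (of_int m2)"
  shows "at_most_two_pieces ends len f e"
  using assms unfolding at_most_two_pieces_def affine_on_def by blast

lemma divisor_at_breakpoint:
  assumes "vertex_supported V D" "sorted_wrt (<) ts" "0 < i" "i < length ts - 1"
    and pieces: "\<And>i. i < length ts - 1 \<Longrightarrow> affine_on (edge_fun ends len f e) {ts!i..ts!Suc i} (of_int (M i))"
  shows "real_of_int (D (Pt e (ts!i))) + ord E ends len f (Pt e (ts!i)) = of_int (M i) - of_int (M (i - 1))"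
proof -
  have "D (Pt e (ts!i)) = 0" using assms(1) by (auto simp: vertex_supported_def)
  moreover have "affine_on (edge_fun ends len f e) {ts!(i - 1)..ts!i} (of_int (M (i - 1)))"
    using pieces[of "i - 1"] assms(3,4) by simp
  ultimately show ?thesis
    using slope_jump_at_breakpoint[OF assms(2-4)] pieces[OF assms(4)] by simp
qed

lemma anchor_one_slope_jump:
  assumes "vertex_supported V D" "f \<in> RD V E ends len D"
    and "anchor E len (\<lambda>x. real_of_int (D x) + ord E ends len f x)" "e \<in> E"
    and ts: "sorted_wrt (<) ts" "ts!0 = 0" "ts!(length ts - 1) = len e"
    and pieces: "\<And>i. i < length ts - 1 \<Longrightarrow> affine_on (edge_fun ends len f e) {ts!i..ts!Suc i} (of_int (M i))"
    and "0 < i" "i < length ts - 1" "M i \<noteq> M (i - 1)"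
    and "0 < j" "j < length ts - 1" "M j \<noteq> M (j - 1)"
  shows "i = j"
proof -
  let ?L = "\<lambda>x. real_of_int (D x) + ord E ends len f x"
  have interior: "0 < ts!k \<and> ts!k < len e" if "0 < k" "k < length ts - 1" for k
    using that ts sorted_wrt_nth_less[OF ts(1), of 0 k] sorted_wrt_nth_less[OF ts(1), of k "length ts - 1"]
    by auto
  have jump_pos: "?L (Pt e (ts!k)) > 0" if "0 < k" "k < length ts - 1" "M k \<noteq> M (k - 1)" for k
  proof -
    have "is_point V E len (Pt e (ts!k))"
      using interior[OF that(1,2)] \<open>e \<in> E\<close> unfolding is_point_def by blast
    then have "?L (Pt e (ts!k)) \<ge> 0" using assms(2) unfolding RD_def by blast
    moreover have "?L (Pt e (ts!k)) \<noteq> 0"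
      using divisor_at_breakpoint[OF assms(1) ts(1) that(1,2) pieces] that(3) by simp
    ultimately show ?thesis by linarith
  qed
  have anchor_e: "s = t"
    if "0 < s" "s < len e" "0 < t" "t < len e" "?L (Pt e s) > 0" "?L (Pt e t) > 0" for s t
    using assms(3) \<open>e \<in> E\<close> that unfolding anchor_def by blast
  have "ts!i = ts!j"
    using interior assms(9-14) by (intro anchor_e jump_pos) auto
  moreover have "distinct ts" using ts(1) strict_sorted_iff by blast
  ultimately show ?thesis using assms(10,13) by (simp add: nth_eq_iff_index_eq)
qed

theorem lemma2p15:
  fixes V :: "'v set" and E :: "'e set" and ends :: "'e \<Rightarrow> 'v \<times> 'v" and len :: "'e \<Rightarrow> real"
    and D :: "('v, 'e) point \<Rightarrow> int" and f :: "('v, 'e) point \<Rightarrow> real"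
  assumes "metric_graph V E ends len"
    and "divisor V E len D" and "effective D" and "vertex_supported V D"
    and "f \<in> RD V E ends len D"
    and "anchor E len (\<lambda>x. real_of_int (D x) + ord E ends len f x)"
  shows "\<forall>e\<in>E. at_most_two_pieces ends len f e"
proof
  fix e assume "e \<in> E"
  have rf: "rational_function E ends len f" using assms(5) unfolding RD_def by blast
  obtain ts M where ts: "length ts \<ge> 2" "sorted_wrt (<) ts" "ts!0 = 0" "ts!(length ts - 1) = len e"
    and pieces: "\<And>i. i < length ts - 1 \<Longrightarrow> affine_on (edge_fun ends len f e) {ts!i..ts!Suc i} (of_int (M i))"
    using rational_function_edge_partition[OF rf \<open>e \<in> E\<close>] by blast
  have one_jump: "i = j"
    if "0 < i" "i < length ts - 1" "of_int (M i) \<noteq> (of_int (M (i - 1)) :: real)"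
      "0 < j" "j < length ts - 1" "of_int (M j) \<noteq> (of_int (M (j - 1)) :: real)" for i j
    by (rule anchor_one_slope_jump[OF assms(4-6) \<open>e \<in> E\<close> ts(2-4) pieces]) (use that in simp_all)
  obtain k where "k < length ts - 1"
    "affine_on (edge_fun ends len f e) {0..ts!k} (of_int (M 0))"
    "affine_on (edge_fun ends len f e) {ts!k..len e} (of_int (M k))"
    using two_pieces_if_one_jump[OF ts(2,1) pieces one_jump] unfolding ts(3,4) by blast
  moreover have "ts!k \<in> {0..len e}"
    using \<open>k < length ts - 1\<close> ts sorted_nth_mono[OF strict_sorted_imp_sorted[OF ts(2)], of 0 k]
      sorted_nth_mono[OF strict_sorted_imp_sorted[OF ts(2)], of k "length ts - 1"]
    by auto
  ultimately show "at_most_two_pieces ends len f e"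
    by (intro at_most_two_piecesI)
qed

end
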